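(* Let $k\ge 1$ and let $n,n_1,\dots,n_k\ge 1$ be integers; set $m=n+\sum_{j=1}^k n_j$. Define $\varphi(a)=(1-a)^k-\frac{a(m-n)+n}{m}$ for $0\le a\le 1$, and let $a_0\in(0,1)$ be the number such that $\varphi(a_0)=0$ and $\varphi(a)>0$ for all $a\in[0,a_0)$. Let $0<a\le a_0$, and let $z_1,\dots,z_k\in\mathbb{C}$ be pairwise distinct with $|z_j|\le 1$ and $z_j\neq a$ for $j=1,\dots,k$. Let $$p(z)=(z-a)^n\prod_{j=1}^{k}(z-z_j)^{n_j},\quad z\in\mathbb{C}.$$ Then there exists $\zeta\neq a$ such that $p'(\zeta)=0$ and $|a-\zeta|\le 1$.
   Context: The number $a_0$ exists since $\varphi(0)=(m-n)/m>0$ and $\varphi(1)=-1<0$; it is the smallest zero of $\varphi$ in $(0,1)$. *)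

theory Defs
  imports "HOL-Analysis.Analysis"
begin

end

theory Submission
  imports Defs "HOL-Computational_Algebra.Fundamental_Theorem_Algebra"
begin

(* Write p = \<Prod>j. (z - c j) ^ e j with c 0 = a, e 0 = n. Then
   p' = \<Prod>j. (z - c j) ^ (e j - 1) * q  with  q = \<Sum>j. e j * \<Prod>i\<noteq>j. (z - c i),
   a polynomial of degree k with leading coefficient m that does not vanish at any c j, so its k
   roots are critical points of p different from a. If all of them were at distance > 1 from a,
   they would have modulus > 1 - a, so |q 0| = m * \<Prod> |roots| > m (1 - a)^k. But in q 0 the
   term for j = 0 has modulus at most n and every other term contains the factor -a, so
   |q 0| \<le> n + a (m - n), which is at most m (1 - a)^k exactly when \<phi> a \<ge> 0. *)

(* (\<Prod>j\<in>A. z - c j) times the logarithmic derivative \<Sum>j\<in>A. e j / (z - c j) of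
   \<Prod>j\<in>A. (z - c j) ^ e j *)
definition critical_poly :: "('i \<Rightarrow> 'a::comm_ring_1) \<Rightarrow> ('i \<Rightarrow> nat) \<Rightarrow> 'i set \<Rightarrow> 'a poly" where
  "critical_poly c e A = (\<Sum>j\<in>A. smult (of_nat (e j)) (\<Prod>i\<in>A - {j}. [:- c i, 1:]))"

lemma poly_critical_poly:
  "poly (critical_poly c e A) z = (\<Sum>j\<in>A. of_nat (e j) * (\<Prod>i\<in>A - {j}. z - c i))"
  by (simp add: critical_poly_def poly_sum poly_prod)

lemma critical_poly_insert:
  assumes "finite A" and "x \<notin> A"
  shows "critical_poly c e (insert x A) =
    smult (of_nat (e x)) (\<Prod>i\<in>A. [:- c i, 1:]) + [:- c x, 1:] * critical_poly c e A"
proof -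
  have "(\<Prod>i\<in>insert x A - {j}. [:- c i, 1:]) = [:- c x, 1:] * (\<Prod>i\<in>A - {j}. [:- c i, 1:])"
    if "j \<in> A" for j
    using assms that by (auto simp: insert_Diff_if)
  with assms show ?thesis
    by (simp add: critical_poly_def sum_distrib_left mult_smult_right cong: sum.cong)
qed

lemma has_field_derivative_prod_powers:
  fixes c :: "'i \<Rightarrow> 'a::real_normed_field"
  assumes "finite A" and "\<And>j. j \<in> A \<Longrightarrow> 1 \<le> e j"
  shows "((\<lambda>z. \<Prod>j\<in>A. (z - c j) ^ e j) has_field_derivative
           (\<Prod>j\<in>A. (z - c j) ^ (e j - 1)) * poly (critical_poly c e A) z) (at z)"
  using assms
proof (induction A rule: finite_induct)
  case empty
  show ?case by (simp add: critical_poly_def)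
next
  case (insert x A)
  let ?P = "\<Prod>j\<in>A. (z - c j) ^ e j" and ?P' = "\<Prod>j\<in>A. (z - c j) ^ (e j - 1)"
  have IH: "((\<lambda>z. \<Prod>j\<in>A. (z - c j) ^ e j) has_field_derivative ?P' * poly (critical_poly c e A) z) (at z)"
    using insert by simp
  have lower: "(z - c j) ^ (e j - 1) * (z - c j) = (z - c j) ^ e j" if "j \<in> insert x A" for j
    using insert.prems[OF that] by (simp flip: power_Suc2)
  then have lowered: "?P' * (\<Prod>j\<in>A. z - c j) = ?P"
    by (simp flip: prod.distrib)
  have "poly (critical_poly c e (insert x A)) z
      = of_nat (e x) * (\<Prod>j\<in>A. z - c j) + (z - c x) * poly (critical_poly c e A) z"
    using insert.hyps by (simp add: critical_poly_insert poly_prod algebra_simps)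
  then have "(z - c x) ^ (e x - 1) * ?P' * poly (critical_poly c e (insert x A)) z
      = of_nat (e x) * (z - c x) ^ (e x - 1) * (?P' * (\<Prod>j\<in>A. z - c j))
        + ((z - c x) ^ (e x - 1) * (z - c x)) * (?P' * poly (critical_poly c e A) z)"
    by (simp only: ring_distribs mult_ac)
  also have "\<dots> = of_nat (e x) * (z - c x) ^ (e x - 1) * ?P
        + (z - c x) ^ e x * (?P' * poly (critical_poly c e A) z)"
    unfolding lowered lower[OF insertI1] ..
  finally have deriv_eq: "\<dots> = (\<Prod>j\<in>insert x A. (z - c j) ^ (e j - 1)) * poly (critical_poly c e (insert x A)) z"
    using insert.hyps by simp
  have "((\<lambda>z. (z - c x) ^ e x) has_field_derivative of_nat (e x) * (z - c x) ^ (e x - 1)) (at z)"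
    by (auto intro!: derivative_eq_intros)
  from DERIV_mult[OF this IH] show ?case
    using insert.hyps deriv_eq by (simp add: mult_ac)
qed

lemma degree_prod_linear_factors [simp]:
  fixes c :: "'i \<Rightarrow> 'a::idom"
  shows "degree (\<Prod>i\<in>B. [:- c i, 1:]) = card B"
  by (simp add: degree_prod_sum_eq)

lemma coeff_prod_linear_factors_top [simp]:
  fixes c :: "'i \<Rightarrow> 'a::idom"
  shows "coeff (\<Prod>i\<in>B. [:- c i, 1:]) (card B) = 1"
  using lead_coeff_prod[of "\<lambda>i. [:- c i, 1:]" B] by simp

lemma degree_critical_poly_le:
  fixes c :: "'i \<Rightarrow> 'a::idom"
  assumes "finite A"
  shows "degree (critical_poly c e A) \<le> card A - 1"
  using assms unfolding critical_poly_def
  by (intro degree_sum_le) (auto intro: order.trans[OF degree_smult_le] simp: card_Diff_singleton_if)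

lemma coeff_critical_poly_top:
  fixes c :: "'i \<Rightarrow> 'a::idom"
  assumes "finite A"
  shows "coeff (critical_poly c e A) (card A - 1) = of_nat (\<Sum>j\<in>A. e j)"
proof -
  have "coeff (\<Prod>i\<in>A - {j}. [:- c i, 1:]) (card A - 1) = 1" if "j \<in> A" for j
    using coeff_prod_linear_factors_top[of c "A - {j}"] assms that by simp
  then show ?thesis
    by (simp add: critical_poly_def coeff_sum)
qed

lemma degree_critical_poly:
  fixes c :: "'i \<Rightarrow> 'a::{idom, ring_char_0}"
  assumes "finite A" and "(\<Sum>j\<in>A. e j) \<noteq> 0"
  shows "degree (critical_poly c e A) = card A - 1"
    and "lead_coeff (critical_poly c e A) = of_nat (\<Sum>j\<in>A. e j)"
proof -
  show "degree (critical_poly c e A) = card A - 1"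
    using assms degree_critical_poly_le coeff_critical_poly_top
    by (metis le_antisym le_degree of_nat_eq_0_iff)
  then show "lead_coeff (critical_poly c e A) = of_nat (\<Sum>j\<in>A. e j)"
    using coeff_critical_poly_top[OF assms(1)] by simp
qed

lemma poly_critical_poly_at_root:
  fixes c :: "'i \<Rightarrow> 'a::field_char_0"
  assumes "finite A" and "inj_on c A" and "j \<in> A" and "e j \<noteq> 0"
  shows "poly (critical_poly c e A) (c j) \<noteq> 0"
proof -
  have "poly (critical_poly c e A) (c j) = of_nat (e j) * (\<Prod>i\<in>A - {j}. c j - c i)"
    unfolding poly_critical_poly using assms
    by (subst sum.remove[of A j]) (auto intro!: sum.neutral simp: prod_zero_iff)
  also have "\<dots> \<noteq> 0"
    using assms by (auto simp: prod_zero_iff inj_on_def)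
  finally show ?thesis .
qed

lemma critical_poly_root_is_critical_point:
  fixes c :: "'i \<Rightarrow> 'a::real_normed_field"
  assumes "finite A" and "inj_on c A" and "\<And>j. j \<in> A \<Longrightarrow> 1 \<le> e j"
    and "poly (critical_poly c e A) \<zeta> = 0"
  shows "\<zeta> \<notin> c ` A" and "deriv (\<lambda>z. \<Prod>j\<in>A. (z - c j) ^ e j) \<zeta> = 0"
proof -
  show "\<zeta> \<notin> c ` A"
    using assms poly_critical_poly_at_root[of A c _ e] by force
  have "((\<lambda>z. \<Prod>j\<in>A. (z - c j) ^ e j) has_field_derivative
      (\<Prod>j\<in>A. (\<zeta> - c j) ^ (e j - 1)) * poly (critical_poly c e A) \<zeta>) (at \<zeta>)"
    using assms(1,3) by (rule has_field_derivative_prod_powers)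
  then show "deriv (\<lambda>z. \<Prod>j\<in>A. (z - c j) ^ e j) \<zeta> = 0"
    using assms(4) by (simp add: DERIV_imp_deriv)
qed

lemma norm_poly_critical_poly_0_le:
  fixes c :: "'i \<Rightarrow> 'a::real_normed_field"
  assumes "finite A" and "j0 \<in> A" and "\<And>i. i \<in> A - {j0} \<Longrightarrow> norm (c i) \<le> 1"
  shows "norm (poly (critical_poly c e A) 0) \<le> real (e j0) + norm (c j0) * real (\<Sum>j\<in>A - {j0}. e j)"
proof -
  have small: "norm (\<Prod>i\<in>B. 0 - c i) \<le> 1" if "B \<subseteq> A - {j0}" for B
    using assms(3) that by (auto simp flip: prod_norm intro!: prod_le_1)
  have "norm (of_nat (e j) * (\<Prod>i\<in>A - {j}. 0 - c i)) \<le> norm (c j0) * e j" if "j \<in> A - {j0}" for j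
  proof -
    have factor_j0: "(\<Prod>i\<in>A - {j}. 0 - c i) = - c j0 * (\<Prod>i\<in>A - {j} - {j0}. 0 - c i)"
      using assms that by (subst prod.remove[of _ j0]) auto
    have "norm (\<Prod>i\<in>A - {j} - {j0}. 0 - c i) \<le> 1"
      by (rule small) auto
    then have "norm (c j0) * e j * norm (\<Prod>i\<in>A - {j} - {j0}. 0 - c i) \<le> norm (c j0) * e j"
      by (rule mult_left_le) simp
    then show ?thesis
      unfolding factor_j0 by (simp add: norm_mult mult_ac)
  qed
  then have others: "norm (\<Sum>j\<in>A - {j0}. of_nat (e j) * (\<Prod>i\<in>A - {j}. 0 - c i))
      \<le> norm (c j0) * real (\<Sum>j\<in>A - {j0}. e j)"
    by (auto simp: sum_distrib_left intro: order.trans[OF norm_sum] sum_mono)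
  have "norm (of_nat (e j0) * (\<Prod>i\<in>A - {j0}. 0 - c i)) \<le> e j0"
    using small[of "A - {j0}"] by (simp add: norm_mult mult_left_le)
  with others show ?thesis
    unfolding poly_critical_poly using assms
    by (subst sum.remove[of A j0]) (auto intro: order.trans[OF norm_triangle_ineq])
qed

lemma norm_poly_0_gt_if_roots_outside:
  fixes q :: "complex poly"
  assumes "degree q \<noteq> 0" and "0 \<le> r" and "\<And>z. poly q z = 0 \<Longrightarrow> r < cmod z"
  shows "cmod (lead_coeff q) * r ^ degree q < cmod (poly q 0)"
proof -
  obtain root where factored: "smult (lead_coeff q) (\<Prod>i<degree q. [:- root i, 1:]) = q"
    using complex_poly_decompose' by blast
  have poly_q: "poly q z = lead_coeff q * (\<Prod>i<degree q. z - root i)" for z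
  proof -
    have "poly q z = poly (smult (lead_coeff q) (\<Prod>i<degree q. [:- root i, 1:])) z"
      by (simp only: factored)
    then show ?thesis
      by (simp add: poly_prod)
  qed
  have "poly q (root i) = 0" if "i < degree q" for i
    unfolding poly_q using that by (auto simp: prod_zero_iff)
  then have far: "r < cmod (root i)" if "i < degree q" for i
    using assms(3) that by blast
  have "r ^ degree q < (\<Prod>i<degree q. cmod (root i))"
    using prod_mono_strict[of 0 "{..<degree q}" "\<lambda>_. r" "\<lambda>i. cmod (root i)"] far assms(1,2)
    by (fastforce intro: less_imp_le order.strict_trans1)
  moreover have "lead_coeff q \<noteq> 0"
    using assms(1) by auto
  moreover have "cmod (poly q 0) = cmod (lead_coeff q) * (\<Prod>i<degree q. cmod (root i))"
    unfolding poly_q by (simp add: norm_mult flip: prod_norm)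
  ultimately show ?thesis
    by simp
qed

lemma inj_on_fun_upd_insert:
  assumes "x \<notin> A" and "inj_on f A" and "y \<notin> f ` A"
  shows "inj_on (f(x := y)) (insert x A)"
  using assms by (auto simp: inj_on_def)

lemma critical_point_near_root:
  fixes c :: "'i \<Rightarrow> complex"
  assumes "finite A" and "inj_on c A" and "\<And>j. j \<in> A \<Longrightarrow> 1 \<le> e j"
    and "j0 \<in> A" and "2 \<le> card A" and "cmod (c j0) \<le> 1"
    and "\<And>i. i \<in> A - {j0} \<Longrightarrow> cmod (c i) \<le> 1"
    and "real (e j0) + cmod (c j0) * real (\<Sum>j\<in>A - {j0}. e j)
           \<le> real (\<Sum>j\<in>A. e j) * (1 - cmod (c j0)) ^ (card A - 1)"
  shows "\<exists>\<zeta>. \<zeta> \<notin> c ` A \<and> deriv (\<lambda>z. \<Prod>j\<in>A. (z - c j) ^ e j) \<zeta> = 0 \<and> cmod (c j0 - \<zeta>) \<le> 1"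
proof (rule ccontr)
  assume no_close_critical_point: "\<not> ?thesis"
  define Q where "Q = critical_poly c e A"
  have "(\<Sum>j\<in>A. e j) \<noteq> 0"
    using assms(1,3,4) by (metis not_one_le_zero sum_eq_0_iff)
  then have degree_Q: "degree Q = card A - 1" and lead_coeff_Q: "lead_coeff Q = of_nat (\<Sum>j\<in>A. e j)"
    using degree_critical_poly[OF assms(1)] unfolding Q_def by auto
  have roots_far: "1 - cmod (c j0) < cmod \<zeta>" if "poly Q \<zeta> = 0" for \<zeta>
  proof -
    have "\<zeta> \<notin> c ` A" and "deriv (\<lambda>z. \<Prod>j\<in>A. (z - c j) ^ e j) \<zeta> = 0"
      using critical_poly_root_is_critical_point[OF assms(1-3)] that unfolding Q_def by auto
    then have "1 < cmod (c j0 - \<zeta>)"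
      using no_close_critical_point by auto
    also have "\<dots> \<le> cmod (c j0) + cmod \<zeta>"
      by (rule norm_triangle_ineq4)
    finally show ?thesis by simp
  qed
  have "cmod (lead_coeff Q) * (1 - cmod (c j0)) ^ degree Q < cmod (poly Q 0)"
    by (rule norm_poly_0_gt_if_roots_outside) (use degree_Q assms(5,6) roots_far in auto)
  then have "real (\<Sum>j\<in>A. e j) * (1 - cmod (c j0)) ^ (card A - 1) < cmod (poly Q 0)"
    using degree_Q lead_coeff_Q by (metis norm_of_nat)
  also have "\<dots> \<le> real (e j0) + cmod (c j0) * real (\<Sum>j\<in>A - {j0}. e j)"
    unfolding Q_def using assms(1,4,7) by (rule norm_poly_critical_poly_0_le)
  finally show False
    using assms(8) by simp
qed

lemma critical_point_near_distinguished_root: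
  fixes w :: complex and zs :: "nat \<Rightarrow> complex"
  assumes "1 \<le> k" and "1 \<le> n" and "\<forall>j\<in>{1..k}. 1 \<le> ns j"
    and "inj_on zs {1..k}" and "\<forall>j\<in>{1..k}. cmod (zs j) \<le> 1 \<and> zs j \<noteq> w" and "cmod w \<le> 1"
    and "real n + cmod w * real (\<Sum>j=1..k. ns j) \<le> real (n + (\<Sum>j=1..k. ns j)) * (1 - cmod w) ^ k"
  shows "\<exists>\<zeta>. \<zeta> \<noteq> w \<and> deriv (\<lambda>z. (z - w) ^ n * (\<Prod>j=1..k. (z - zs j) ^ ns j)) \<zeta> = 0
           \<and> cmod (w - \<zeta>) \<le> 1"
proof -
  define c where "c = zs(0 := w)"
  define e where "e = ns(0 := n)"
  have "w \<notin> zs ` {1..k}"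
    using assms(5) by auto
  then have "inj_on (zs(0 := w)) (insert 0 {1..k})"
    using assms(4) by (intro inj_on_fun_upd_insert) auto
  moreover have "insert 0 {1..k} = {0..k}"
    by auto
  ultimately have inj: "inj_on c {0..k}"
    unfolding c_def by metis
  have "(\<Prod>j\<in>{1..k}. (z - c j) ^ e j) = (\<Prod>j=1..k. (z - zs j) ^ ns j)" for z
    by (rule prod.cong) (auto simp: c_def e_def)
  then have p_eq: "(\<lambda>z. (z - w) ^ n * (\<Prod>j=1..k. (z - zs j) ^ ns j)) = (\<lambda>z. \<Prod>j\<in>{0..k}. (z - c j) ^ e j)"
    by (simp add: prod.atLeast_Suc_atMost c_def e_def)
  have sum_others: "(\<Sum>j\<in>{0..k} - {0}. e j) = (\<Sum>j=1..k. ns j)"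
    by (rule sum.cong) (auto simp: e_def)
  then have "(\<Sum>j\<in>{0..k}. e j) = n + (\<Sum>j=1..k. ns j)"
    by (simp add: sum.remove[of "{0..k}" 0] e_def)
  then have bound: "real (e 0) + cmod (c 0) * real (\<Sum>j\<in>{0..k} - {0}. e j)
      \<le> real (\<Sum>j\<in>{0..k}. e j) * (1 - cmod (c 0)) ^ (card {0..k} - 1)"
    using assms(7) sum_others by (simp add: c_def e_def)
  have "\<exists>\<zeta>. \<zeta> \<notin> c ` {0..k} \<and> deriv (\<lambda>z. \<Prod>j\<in>{0..k}. (z - c j) ^ e j) \<zeta> = 0 \<and> cmod (c 0 - \<zeta>) \<le> 1"
  proof (rule critical_point_near_root[OF _ inj])
    show "1 \<le> e j" if "j \<in> {0..k}" for j
      using that assms(2,3) by (auto simp: e_def)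
    show "cmod (c i) \<le> 1" if "i \<in> {0..k} - {0}" for i
      using that assms(5) by (auto simp: c_def)
  qed (use bound assms(1,6) in \<open>auto simp: c_def\<close>)
  then show ?thesis
    unfolding p_eq by (auto simp: c_def)
qed

theorem theorem2:
  fixes k n :: nat and ns :: "nat \<Rightarrow> nat" and zs :: "nat \<Rightarrow> complex"
    and a a0 :: real and m :: nat and \<phi> :: "real \<Rightarrow> real" and p :: "complex \<Rightarrow> complex"
  assumes "k \<ge> 1" and "n \<ge> 1" and "\<forall>j\<in>{1..k}. ns j \<ge> 1"
    and m_def: "m = n + (\<Sum>j=1..k. ns j)"
    and phi_def: "\<phi> = (\<lambda>b. (1 - b) ^ k - (b * (real m - real n) + real n) / real m)"
    and "0 < a0" and "a0 < 1" and "\<phi> a0 = 0" and "\<forall>b\<in>{0..<a0}. \<phi> b > 0"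
    and "0 < a" and "a \<le> a0"
    and "inj_on zs {1..k}"
    and "\<forall>j\<in>{1..k}. cmod (zs j) \<le> 1 \<and> zs j \<noteq> complex_of_real a"
    and p_def: "p = (\<lambda>z. (z - complex_of_real a) ^ n * (\<Prod>j=1..k. (z - zs j) ^ ns j))"
  shows "\<exists>\<zeta>. \<zeta> \<noteq> complex_of_real a \<and> deriv p \<zeta> = 0 \<and> cmod (complex_of_real a - \<zeta>) \<le> 1"
proof -
  have "\<phi> a \<ge> 0"
    using assms(8-11) by (cases "a < a0") (auto simp: less_imp_le)
  moreover have "m > 0"
    using assms(2) m_def by simp
  ultimately have "a * (real m - real n) + real n \<le> real m * (1 - a) ^ k"
    unfolding phi_def by (simp add: field_simps)
  then have "real n + cmod (complex_of_real a) * real (\<Sum>j=1..k. ns j)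
      \<le> real (n + (\<Sum>j=1..k. ns j)) * (1 - cmod (complex_of_real a)) ^ k"
    using assms(10) unfolding m_def by (simp add: algebra_simps)
  then show ?thesis
    unfolding p_def using assms(1-3,7,10-13)
    by (intro critical_point_near_distinguished_root) auto
qed

end
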